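(* Let $\mathcal G$ be a continuous game with players $k\in\{1,\dots,K\}$, action sets $\mathcal Z_k=\mathbb R^{n_k}$ and twice continuously differentiable cost functions $f_k:\mathbb R^n\to\mathbb R$, with gradient operator $F=F_{\mathcal G}$. Suppose $\mathcal G$ is monotone and there are $\ell,\Lambda>0$ with $\|F(z)-F(z')\|\le\ell\|z-z'\|$ and $\|\partial F(z)-\partial F(z')\|_\sigma\le\Lambda\|z-z'\|$ for all $z,z'$. Let $z^{(-1)},z^{(0)}\in\mathbb R^n$ and suppose there is $z^*$ with $F(z^* )=0$, $\|z^*-z^{(-1)}\|\le D$, $\|z^*-z^{(0)}\|\le D$. Let $\eta\le\min\{\frac1{150\ell},\frac1{1711D\Lambda}\}$ and let $z^{(t)}$ be the iterates $z^{(t+1)}=z^{(t)}-2\eta F(z^{(t)})+\eta F(z^{(t-1)})$. For each $k$ let $\mathcal Z_k':=\{w\in\mathbb R^{n_k}:\|w-z_k^{(0)}\|\le 3D\}$ and $\mathcal Z'=\prod_k\mathcal Z_k'$. Then for every integer $T\ge1$, $$\mathrm{Gap}_{\mathcal G}^{\mathcal Z'}(z^{(T)})\le\frac{180KD^2}{\eta\sqrt T}.$$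
   Context: $F_{\mathcal G}(z):=(\nabla_{z_1}f_1(z),\dots,\nabla_{z_K}f_K(z))$; the game is monotone if $\langle F_{\mathcal G}(z')-F_{\mathcal G}(z),z'-z\rangle\ge0$ for all $z,z'$. $\partial F$ is the Jacobian, $\|\cdot\|_\sigma$ the spectral norm, $z_k^{(0)}$ the $k$-th block of $z^{(0)}$. For compact $\mathcal Z_k'\subseteq\mathbb R^{n_k}$, the total gap function is $\mathrm{Gap}_{\mathcal G}^{\mathcal Z'}(z):=\sum_{k=1}^K\big(f_k(z)-\min_{z_k'\in\mathcal Z_k'}f_k(z_k',z_{-k})\big)$, where $z_{-k}$ denotes the actions of the players other than $k$. *)

theory Defs
  imports "HOL-Analysis.Analysis"
begin

text \<open>The joint action space is R^n, modelled as real^'n. The coordinates are partitioned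
  into K blocks by blk :: 'n => nat; block k (k < K) is the action space R^{n_k} of player k.\<close>

definition block_proj :: "('n::finite \<Rightarrow> nat) \<Rightarrow> nat \<Rightarrow> real^'n \<Rightarrow> real^'n" where
  "block_proj blk k v = (\<chi> i. if blk i = k then v $ i else 0)"

definition replace_block :: "('n::finite \<Rightarrow> nat) \<Rightarrow> nat \<Rightarrow> real^'n \<Rightarrow> real^'n \<Rightarrow> real^'n" where
  "replace_block blk k w z = (\<chi> i. if blk i = k then w $ i else z $ i)"

text \<open>Gradient operator F_G(z) = (grad_{z_1} f_1(z), ..., grad_{z_K} f_K(z)), where g k z is the
  full gradient of f k at z.\<close>
definition game_op :: "('n::finite \<Rightarrow> nat) \<Rightarrow> (nat \<Rightarrow> real^'n \<Rightarrow> real^'n) \<Rightarrow> real^'n \<Rightarrow> real^'n" where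
  "game_op blk g z = (\<chi> i. g (blk i) z $ i)"

text \<open>Z_k' = {w in R^{n_k} : ||w - z_k^(0)|| <= r}, embedded as vectors supported on block k.\<close>
definition ball_block :: "('n::finite \<Rightarrow> nat) \<Rightarrow> nat \<Rightarrow> real^'n \<Rightarrow> real \<Rightarrow> (real^'n) set" where
  "ball_block blk k z0 r = {w. block_proj blk k w = w \<and> norm (w - block_proj blk k z0) \<le> r}"

definition total_gap :: "('n::finite \<Rightarrow> nat) \<Rightarrow> nat \<Rightarrow> (nat \<Rightarrow> real^'n \<Rightarrow> real) \<Rightarrow> (nat \<Rightarrow> (real^'n) set) \<Rightarrow> real^'n \<Rightarrow> real" where
  "total_gap blk K f Z z = (\<Sum>k<K. f k z - (INF w\<in>Z k. f k (replace_block blk k w z)))"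

end

theory Submission
  imports Defs
begin

text \<open>With \<open>G = \<eta> F\<close> the iteration is Popov's past extragradient method for the monotone,
  \<open>\<eta> \<ell>\<close>-Lipschitz operator \<open>G\<close>. The energy
  \<open>\<parallel>w n - z*\<parallel>\<^sup>2 + 2 \<parallel>G (x (n+1)) - G (x n)\<parallel>\<^sup>2\<close> decreases by at least \<open>\<parallel>G (x n)\<parallel>\<^sup>2 / 2\<close>
  per step; this keeps the iterates within \<open>4 D\<close> of \<open>z*\<close> and bounds \<open>\<Sum> \<parallel>G (x n)\<parallel>\<^sup>2\<close> by \<open>4 D\<^sup>2\<close>.
  The potential \<open>\<parallel>G (w (n+1))\<parallel>\<^sup>2 + \<parallel>G (x (n+1)) - G (x n)\<parallel>\<^sup>2 / 4\<close> is nonincreasing, which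
  turns this summability into the last-iterate rate \<open>\<parallel>G (x n)\<parallel>\<^sup>2 = O(D\<^sup>2 / n)\<close>.
  Finally, monotonicity of \<open>F\<close> makes \<open>f k\<close> convex along deviations of player \<open>k\<close> alone, so a
  unilateral deviation of length at most \<open>8 D\<close> lowers \<open>f k\<close> by at most \<open>8 D \<parallel>F z\<parallel>\<close>.\<close>

lemma norm_diff_power2:
  fixes u v :: "'a::real_inner"
  shows "(norm (u - v))\<^sup>2 = (norm u)\<^sup>2 - 2 * inner u v + (norm v)\<^sup>2"
  by (simp add: power2_norm_eq_inner inner_diff_left inner_diff_right inner_commute)

lemma norm_add_power2_le:
  fixes u v :: "'a::real_normed_vector"
  shows "(norm (u + v))\<^sup>2 \<le> 2 * (norm u)\<^sup>2 + 2 * (norm v)\<^sup>2"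
proof -
  have "(norm (u + v))\<^sup>2 \<le> (norm u + norm v)\<^sup>2"
    by (simp add: norm_triangle_ineq power_mono)
  also have "\<dots> \<le> 2 * (norm u)\<^sup>2 + 2 * (norm v)\<^sup>2"
    using sum_squares_bound[of "norm u" "norm v"] by (simp add: power2_sum)
  finally show ?thesis .
qed

lemma norm_diff_power2_le:
  fixes u v :: "'a::real_normed_vector"
  shows "(norm (u - v))\<^sup>2 \<le> 2 * (norm u)\<^sup>2 + 2 * (norm v)\<^sup>2"
  using norm_add_power2_le[of u "- v"] by simp

locale optimistic_gradient =
  fixes G :: "'a::real_inner \<Rightarrow> 'a" and x :: "nat \<Rightarrow> 'a" and c :: real
  assumes monotone: "\<And>u v. 0 \<le> inner (G u - G v) (u - v)"
    and lipschitz: "\<And>u v. norm (G u - G v) \<le> c * norm (u - v)"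
    and c_nonneg: "0 \<le> c" and c_le: "c \<le> 1/5"
    and step: "\<And>n. x (Suc (Suc n)) = x (Suc n) - 2 *\<^sub>R G (x (Suc n)) + G (x n)"
begin

lemma c_sq_mult_le:
  assumes "0 \<le> a"
  shows "c\<^sup>2 * a \<le> a / 25"
proof -
  have "c\<^sup>2 \<le> (1/5)\<^sup>2"
    using c_nonneg c_le by (intro power_mono) auto
  then show ?thesis
    using mult_right_mono[OF _ assms, of "c\<^sup>2" "1/25"] by (simp add: power_divide)
qed

lemma lipschitz_power2: "(norm (G u - G v))\<^sup>2 \<le> c\<^sup>2 * (norm (u - v))\<^sup>2"
  using power_mono[OF lipschitz[of u v] norm_ge_zero] by (simp add: power_mult_distrib)

definition w :: "nat \<Rightarrow> 'a" where
  "w n = x (Suc n) + G (x n)"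

lemma x_Suc_eq: "x (Suc n) = w n - G (x n)"
  by (simp add: w_def)

lemma w_Suc: "w (Suc n) = w n - G (x (Suc n))"
  by (simp add: w_def step scaleR_2 algebra_simps)

definition jump :: "nat \<Rightarrow> real" where
  "jump n = (norm (G (x (Suc n)) - G (x n)))\<^sup>2"

lemma jump_nonneg: "0 \<le> jump n"
  by (simp add: jump_def)

lemma jump_Suc_le: "jump (Suc n) \<le> 2/25 * (norm (G (x n)))\<^sup>2 + 8/25 * jump n"
proof -
  have "x (Suc (Suc n)) - x (Suc n) = - G (x n) - 2 *\<^sub>R (G (x (Suc n)) - G (x n))"
    by (simp add: step scaleR_2 algebra_simps)
  then have step_sq:
      "(norm (x (Suc (Suc n)) - x (Suc n)))\<^sup>2 \<le> 2 * (norm (G (x n)))\<^sup>2 + 8 * jump n"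
    using norm_diff_power2_le[of "- G (x n)" "2 *\<^sub>R (G (x (Suc n)) - G (x n))"]
    by (simp add: jump_def power_mult_distrib)
  have "jump (Suc n) \<le> c\<^sup>2 * (norm (x (Suc (Suc n)) - x (Suc n)))\<^sup>2"
    unfolding jump_def by (rule lipschitz_power2)
  also have "\<dots> \<le> c\<^sup>2 * (2 * (norm (G (x n)))\<^sup>2 + 8 * jump n)"
    using step_sq by (simp add: mult_left_mono)
  also have "\<dots> \<le> (2 * (norm (G (x n)))\<^sup>2 + 8 * jump n) / 25"
    using jump_nonneg[of n] by (intro c_sq_mult_le) simp
  also have "\<dots> = 2/25 * (norm (G (x n)))\<^sup>2 + 8/25 * jump n"
    by simp
  finally show ?thesis .
qed

lemma norm_G_w_Suc_diff_le: "(norm (G (w (Suc n)) - G (x (Suc n))))\<^sup>2 \<le> jump n / 25"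
proof -
  have "w (Suc n) - x (Suc n) = G (x n) - G (x (Suc n))"
    by (simp add: w_Suc x_Suc_eq)
  then show ?thesis
    using lipschitz_power2[of "w (Suc n)" "x (Suc n)"] c_sq_mult_le[OF jump_nonneg[of n]]
    by (simp add: jump_def norm_minus_commute)
qed

text \<open>Monotonicity between \<open>w n\<close> and \<open>w (n+1) = w n - G (x (n+1))\<close>.\<close>

lemma norm_G_w_Suc_le:
  "(norm (G (w (Suc n))))\<^sup>2 \<le> (norm (G (w n)))\<^sup>2
     + (norm (G (w (Suc n)) - G (x (Suc n))))\<^sup>2 - (norm (G (w n) - G (x (Suc n))))\<^sup>2"
proof -
  have "0 \<le> inner (G (w (Suc n)) - G (w n)) (w (Suc n) - w n)"
    by (rule monotone)
  then have "inner (G (w (Suc n)) - G (w n)) (G (x (Suc n))) \<le> 0"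
    by (simp add: w_Suc)
  then show ?thesis
    by (simp add: norm_diff_power2 inner_diff_left)
qed

lemma jump_Suc_le_residual:
  "jump (Suc n) \<le> 2 * (norm (G (w (Suc n)) - G (x (Suc (Suc n)))))\<^sup>2 + 2 * (jump n / 25)"
proof -
  have "jump (Suc n) \<le> 2 * (norm (G (x (Suc (Suc n))) - G (w (Suc n))))\<^sup>2
      + 2 * (norm (G (w (Suc n)) - G (x (Suc n))))\<^sup>2"
    using norm_add_power2_le[of "G (x (Suc (Suc n))) - G (w (Suc n))" "G (w (Suc n)) - G (x (Suc n))"]
    by (simp add: jump_def)
  then show ?thesis
    using norm_G_w_Suc_diff_le[of n] by (simp add: norm_minus_commute)
qed

definition potential :: "nat \<Rightarrow> real" where
  "potential n = (norm (G (w (Suc n))))\<^sup>2 + jump n / 4"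

lemma potential_Suc_le: "potential (Suc n) \<le> potential n"
  using norm_G_w_Suc_le[of "Suc n"] norm_G_w_Suc_diff_le[of "Suc n"] jump_Suc_le_residual[of n]
    jump_nonneg[of "Suc n"] jump_nonneg[of n]
  unfolding potential_def by linarith

lemma potential_antimono: "m \<le> n \<Longrightarrow> potential n \<le> potential m"
  using lift_Suc_antimono_le[of potential, OF potential_Suc_le] .

lemma potential_le: "potential n \<le> 3 * (norm (G (x (Suc n))))\<^sup>2 + 3 * (norm (G (x n)))\<^sup>2"
proof -
  have "(norm (G (w (Suc n))))\<^sup>2
      \<le> 2 * (norm (G (x (Suc n))))\<^sup>2 + 2 * (norm (G (w (Suc n)) - G (x (Suc n))))\<^sup>2"
    using norm_add_power2_le[of "G (x (Suc n))" "G (w (Suc n)) - G (x (Suc n))"] by simp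
  moreover have "jump n \<le> 2 * (norm (G (x (Suc n))))\<^sup>2 + 2 * (norm (G (x n)))\<^sup>2"
    unfolding jump_def by (rule norm_diff_power2_le)
  ultimately show ?thesis
    using norm_G_w_Suc_diff_le[of n] jump_nonneg[of n] zero_le_power2[of "norm (G (x n))"]
      zero_le_power2[of "norm (G (x (Suc n)))"]
    unfolding potential_def by linarith
qed

lemma norm_G_Suc_le_potential: "(norm (G (x (Suc n))))\<^sup>2 \<le> 3 * potential n"
proof -
  have "(norm (G (x (Suc n))))\<^sup>2
      \<le> 2 * (norm (G (w (Suc n))))\<^sup>2 + 2 * (norm (G (w (Suc n)) - G (x (Suc n))))\<^sup>2"
    using norm_diff_power2_le[of "G (w (Suc n))" "G (w (Suc n)) - G (x (Suc n))"] by simp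
  moreover have "3 * potential n = 3 * (norm (G (w (Suc n))))\<^sup>2 + 3 * jump n / 4"
    by (simp add: potential_def)
  ultimately show ?thesis
    using norm_G_w_Suc_diff_le[of n] jump_nonneg[of n] zero_le_power2[of "norm (G (w (Suc n)))"]
    by linarith
qed

text \<open>The potential is nonincreasing, so its last value is at most the average of its values,
  and these are controlled by the squared residuals.\<close>

lemma last_residual_le_sum:
  "real (Suc n) * (norm (G (x (Suc n))))\<^sup>2 \<le> 18 * (\<Sum>k<Suc (Suc n). (norm (G (x k)))\<^sup>2)"
proof -
  let ?S = "\<Sum>k<Suc (Suc n). (norm (G (x k)))\<^sup>2"
  have "real (Suc n) * (norm (G (x (Suc n))))\<^sup>2 \<le> real (Suc n) * (3 * potential n)"
    by (rule mult_left_mono[OF norm_G_Suc_le_potential]) simp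
  also have "\<dots> = 3 * (\<Sum>m<Suc n. potential n)"
    by simp
  also have "\<dots> \<le> 3 * (\<Sum>m<Suc n. potential m)"
    by (intro mult_left_mono sum_mono potential_antimono) simp_all
  also have "\<dots> \<le> 3 * (\<Sum>m<Suc n. 3 * (norm (G (x (Suc m))))\<^sup>2 + 3 * (norm (G (x m)))\<^sup>2)"
    by (intro mult_left_mono sum_mono potential_le) simp
  also have "\<dots> = 9 * (\<Sum>m<Suc n. (norm (G (x (Suc m))))\<^sup>2) + 9 * (\<Sum>m<Suc n. (norm (G (x m)))\<^sup>2)"
    by (simp add: sum.distrib sum_distrib_left)
  also have "\<dots> \<le> 18 * ?S"
  proof -
    have "(\<Sum>m<Suc n. (norm (G (x (Suc m))))\<^sup>2) \<le> ?S"
      by (simp only: sum.lessThan_Suc_shift[of _ "Suc n"]) simp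
    moreover have "(\<Sum>m<Suc n. (norm (G (x m)))\<^sup>2) \<le> ?S"
      by (simp only: sum.lessThan_Suc[of _ "Suc n"]) simp
    ultimately show ?thesis by linarith
  qed
  finally show ?thesis .
qed

end

locale optimistic_gradient_root = optimistic_gradient +
  fixes zs :: 'a and D :: real
  assumes root: "G zs = 0"
    and dist_x0: "norm (zs - x 0) \<le> D" and dist_x1: "norm (zs - x 1) \<le> D"
begin

lemma D_nonneg: "0 \<le> D"
  using dist_x0 norm_ge_zero order_trans by blast

definition energy :: "nat \<Rightarrow> real" where
  "energy n = (norm (w n - zs))\<^sup>2 + 2 * jump n"

lemma dist_w_Suc_le:
  "(norm (w (Suc n) - zs))\<^sup>2 \<le> (norm (w n - zs))\<^sup>2 + jump n - (norm (G (x n)))\<^sup>2"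
proof -
  have mono: "0 \<le> inner (G (x (Suc n))) (x (Suc n) - zs)"
    using monotone[of "x (Suc n)" zs] by (simp add: root)
  have "(norm (w (Suc n) - zs))\<^sup>2
      = (norm (w n - zs))\<^sup>2 - 2 * inner (w n - zs) (G (x (Suc n))) + (norm (G (x (Suc n))))\<^sup>2"
    using norm_diff_power2[of "w n - zs" "G (x (Suc n))"] by (simp add: w_Suc algebra_simps)
  moreover have "inner (w n - zs) (G (x (Suc n)))
      = inner (G (x (Suc n))) (x (Suc n) - zs) + inner (G (x n)) (G (x (Suc n)))"
    by (simp add: w_def inner_add_right inner_diff_right inner_commute)
  moreover have "jump n
      = (norm (G (x (Suc n))))\<^sup>2 - 2 * inner (G (x n)) (G (x (Suc n))) + (norm (G (x n)))\<^sup>2"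
    by (simp add: jump_def norm_diff_power2 inner_commute)
  ultimately show ?thesis
    using mono by linarith
qed

lemma energy_Suc_le: "energy (Suc n) \<le> energy n - (norm (G (x n)))\<^sup>2 / 2"
  using dist_w_Suc_le[of n] jump_Suc_le[of n] jump_nonneg[of n] zero_le_power2[of "norm (G (x n))"]
  unfolding energy_def by linarith

lemma energy_add_sum_le: "energy n + (\<Sum>k<n. (norm (G (x k)))\<^sup>2) / 2 \<le> energy 0"
proof (induction n)
  case (Suc n)
  then show ?case
    using energy_Suc_le[of n] by (simp add: add_divide_distrib)
qed simp

lemma energy_0_le: "energy 0 \<le> 2 * D\<^sup>2"
proof -
  have "norm (G (x 0)) \<le> c * norm (x 0 - zs)"
    using lipschitz[of "x 0" zs] by (simp add: root)
  also have "\<dots> \<le> D / 5"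
    using c_nonneg c_le dist_x0 D_nonneg mult_mono[of c "1/5" "norm (x 0 - zs)" D]
    by (simp add: norm_minus_commute)
  finally have G0: "norm (G (x 0)) \<le> D / 5" .
  have "norm (w 0 - zs) \<le> norm (x 1 - zs) + norm (G (x 0))"
    using norm_triangle_ineq[of "x 1 - zs" "G (x 0)"] by (simp add: w_def algebra_simps)
  also have "\<dots> \<le> 6 / 5 * D"
    using G0 dist_x1 by (simp add: norm_minus_commute)
  finally have "(norm (w 0 - zs))\<^sup>2 \<le> (6 / 5 * D)\<^sup>2"
    by (rule power_mono) simp
  moreover have "norm (x 1 - x 0) \<le> 2 * D"
    using norm_triangle_ineq[of "x 1 - zs" "zs - x 0"] dist_x0 dist_x1
    by (simp add: norm_minus_commute)
  then have "(norm (x 1 - x 0))\<^sup>2 \<le> (2 * D)\<^sup>2"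
    by (rule power_mono) simp
  then have "jump 0 \<le> (2 * D)\<^sup>2 / 25"
    using lipschitz_power2[of "x 1" "x 0"] c_sq_mult_le[of "(norm (x 1 - x 0))\<^sup>2"]
    by (simp add: jump_def)
  moreover have "(6 / 5 * D)\<^sup>2 = 36/25 * D\<^sup>2" "(2 * D)\<^sup>2 = 4 * D\<^sup>2"
    by (simp_all add: power_mult_distrib power2_eq_square)
  ultimately show ?thesis
    using zero_le_power2[of D] unfolding energy_def by linarith
qed

lemma sum_norm_G_le: "(\<Sum>k<n. (norm (G (x k)))\<^sup>2) \<le> 4 * D\<^sup>2"
  using energy_add_sum_le[of n] energy_0_le jump_nonneg[of n] zero_le_power2[of "norm (w n - zs)"]
  unfolding energy_def by linarith

lemma norm_G_le: "norm (G (x n)) \<le> 2 * D"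
proof -
  have "(norm (G (x n)))\<^sup>2 \<le> (\<Sum>k<Suc n. (norm (G (x k)))\<^sup>2)"
    by (rule member_le_sum) auto
  also have "\<dots> \<le> (2 * D)\<^sup>2"
    using sum_norm_G_le[of "Suc n"] by (simp add: power_mult_distrib)
  finally show ?thesis
    by (rule power2_le_imp_le) (simp add: D_nonneg)
qed

lemma dist_w_le: "norm (w n - zs) \<le> 2 * D"
proof -
  have "0 \<le> (\<Sum>k<n. (norm (G (x k)))\<^sup>2)"
    by (simp add: sum_nonneg)
  then have "(norm (w n - zs))\<^sup>2 \<le> energy 0"
    using energy_add_sum_le[of n] jump_nonneg[of n] unfolding energy_def by linarith
  moreover have "(2 * D)\<^sup>2 = 4 * D\<^sup>2"
    by (simp add: power_mult_distrib)
  ultimately have "(norm (w n - zs))\<^sup>2 \<le> (2 * D)\<^sup>2"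
    using energy_0_le zero_le_power2[of D] by linarith
  then show ?thesis
    by (rule power2_le_imp_le) (simp add: D_nonneg)
qed

lemma dist_x_Suc_le: "norm (x (Suc n) - zs) \<le> 4 * D"
proof -
  have "norm (x (Suc n) - zs) = norm ((w n - zs) - G (x n))"
    by (simp add: x_Suc_eq algebra_simps)
  also have "\<dots> \<le> norm (w n - zs) + norm (G (x n))"
    by (rule norm_triangle_ineq4)
  finally show ?thesis
    using dist_w_le[of n] norm_G_le[of n] by linarith
qed

lemma last_residual_le: "real (Suc n) * (norm (G (x (Suc n))))\<^sup>2 \<le> 72 * D\<^sup>2"
  using last_residual_le_sum[of n] sum_norm_G_le[of "Suc (Suc n)"] by linarith

end

lemma optimistic_gradient_last_iterate:
  fixes F :: "'a::real_inner \<Rightarrow> 'a" and z :: "int \<Rightarrow> 'a"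
  assumes monotone: "\<And>u v. 0 \<le> inner (F u - F v) (u - v)"
    and lipschitz: "\<And>u v. norm (F u - F v) \<le> ell * norm (u - v)"
    and eta_pos: "0 < \<eta>" and ell_nonneg: "0 \<le> ell" and step_size: "\<eta> * ell \<le> 1/5"
    and root: "F zs = 0" and dist_m1: "norm (zs - z (-1)) \<le> D" and dist_0: "norm (zs - z 0) \<le> D"
    and iter: "\<And>t. 0 \<le> t \<Longrightarrow> z (t + 1) = z t - (2 * \<eta>) *\<^sub>R F (z t) + \<eta> *\<^sub>R F (z (t - 1))"
  shows "norm (z (int T) - zs) \<le> 4 * D"
    and "\<eta> * sqrt (real T) * norm (F (z (int T))) \<le> 9 * D"
proof -
  interpret optimistic_gradient_root "\<lambda>u. \<eta> *\<^sub>R F u" "\<lambda>n. z (int n - 1)" "\<eta> * ell" zs D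
  proof unfold_locales
    show "0 \<le> inner (\<eta> *\<^sub>R F u - \<eta> *\<^sub>R F v) (u - v)" for u v
      using monotone[of u v] eta_pos by (simp add: scaleR_diff_right[symmetric])
    show "norm (\<eta> *\<^sub>R F u - \<eta> *\<^sub>R F v) \<le> \<eta> * ell * norm (u - v)" for u v
      using mult_left_mono[OF lipschitz[of u v], of \<eta>] eta_pos
      by (simp add: scaleR_diff_right[symmetric] mult.assoc)
    show "z (int (Suc (Suc n)) - 1)
        = z (int (Suc n) - 1) - 2 *\<^sub>R \<eta> *\<^sub>R F (z (int (Suc n) - 1)) + \<eta> *\<^sub>R F (z (int n - 1))" for n
      using iter[of "int n"] by (simp add: add.commute)
  qed (use eta_pos ell_nonneg step_size root dist_m1 dist_0 in simp_all)
  show "norm (z (int T) - zs) \<le> 4 * D"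
    using dist_x_Suc_le[of T] by simp
  have "(\<eta> * sqrt (real T) * norm (F (z (int T))))\<^sup>2
      \<le> real (Suc T) * (norm (\<eta> *\<^sub>R F (z (int T))))\<^sup>2"
    using eta_pos by (simp add: power_mult_distrib mult_right_mono)
  also have "\<dots> \<le> 72 * D\<^sup>2"
    using last_residual_le[of T] by (simp add: power_mult_distrib)
  also have "\<dots> \<le> (9 * D)\<^sup>2"
    by (simp add: power_mult_distrib)
  finally show "\<eta> * sqrt (real T) * norm (F (z (int T))) \<le> 9 * D"
    by (rule power2_le_imp_le) (simp add: D_nonneg)
qed

lemma norm_block_proj_le: "norm (block_proj blk k v) \<le> norm v"
  by (rule norm_le_componentwise_cart) (simp add: block_proj_def)

lemma replace_block_diff:
  assumes "block_proj blk k w = w"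
  shows "z - replace_block blk k w z = block_proj blk k z - w"
proof -
  have "w $ i = 0" if "blk i \<noteq> k" for i
    using that arg_cong[OF assms, of "\<lambda>v. v $ i"] by (simp add: block_proj_def)
  then show ?thesis
    by (simp add: vec_eq_iff replace_block_def block_proj_def)
qed

lemma dist_replace_block_le:
  assumes "w \<in> ball_block blk k z0 r"
  shows "norm (z - replace_block blk k w z) \<le> norm (z - z0) + r"
proof -
  have w: "block_proj blk k w = w" "norm (w - block_proj blk k z0) \<le> r"
    using assms by (auto simp: ball_block_def)
  have "z - replace_block blk k w z = block_proj blk k (z - z0) + (block_proj blk k z0 - w)"
    by (simp add: replace_block_diff[OF w(1)] block_proj_def vec_eq_iff)
  also have "norm \<dots> \<le> norm (block_proj blk k (z - z0)) + norm (block_proj blk k z0 - w)"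
    by (rule norm_triangle_ineq)
  also have "\<dots> \<le> norm (z - z0) + r"
    using norm_block_proj_le[of blk k "z - z0"] w(2) by (simp add: norm_minus_commute)
  finally show ?thesis .
qed

lemma inner_game_op_block:
  assumes "\<And>i. blk i \<noteq> k \<Longrightarrow> d $ i = 0"
  shows "game_op blk g z \<bullet> d = g k z \<bullet> d"
proof -
  have "game_op blk g z $ i * d $ i = g k z $ i * d $ i" for i
    using assms[of i] by (cases "blk i = k") (auto simp: game_op_def)
  then show ?thesis
    unfolding inner_vec_def inner_real_def by (simp only:)
qed

text \<open>Along the segment from the deviation to \<open>z\<close> only block \<open>k\<close> moves, so there the
  derivative of \<open>f k\<close> is given by \<open>F\<close>, which is monotone: \<open>f k\<close> is convex along the segment.\<close>

lemma unilateral_deviation_le: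
  fixes f :: "nat \<Rightarrow> real^'n::finite \<Rightarrow> real"
  assumes grad: "\<And>x. (f k has_derivative (\<lambda>h. g k x \<bullet> h)) (at x)"
    and monotone: "\<And>x y. 0 \<le> (game_op blk g y - game_op blk g x) \<bullet> (y - x)"
  shows "f k z - f k (replace_block blk k w z)
           \<le> norm (game_op blk g z) * norm (z - replace_block blk k w z)"
proof -
  define y where "y = replace_block blk k w z"
  define d where "d = z - y"
  have d_block: "game_op blk g p \<bullet> d = g k p \<bullet> d" for p
    by (rule inner_game_op_block) (simp add: d_def y_def replace_block_def)
  define \<phi> where "\<phi> s = f k (y + s *\<^sub>R d)" for s :: real
  have "(\<phi> has_derivative (\<lambda>h. g k (y + s *\<^sub>R d) \<bullet> (h *\<^sub>R d))) (at s within {0..1})" for s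
    unfolding \<phi>_def by (rule has_derivative_compose[OF _ grad]) (auto intro!: derivative_eq_intros)
  then obtain \<xi> where \<xi>: "\<xi> \<in> {0<..<1}"
    and mvt: "\<phi> 1 - \<phi> 0 = g k (y + \<xi> *\<^sub>R d) \<bullet> ((1 - 0) *\<^sub>R d)"
    using mvt_simple[of 0 1 \<phi> "\<lambda>s h. g k (y + s *\<^sub>R d) \<bullet> (h *\<^sub>R d)"] by auto
  have "0 \<le> (game_op blk g z - game_op blk g (y + \<xi> *\<^sub>R d)) \<bullet> (z - (y + \<xi> *\<^sub>R d))"
    by (rule monotone)
  also have "z - (y + \<xi> *\<^sub>R d) = (1 - \<xi>) *\<^sub>R d"
    by (simp add: d_def algebra_simps)
  finally have "game_op blk g (y + \<xi> *\<^sub>R d) \<bullet> d \<le> game_op blk g z \<bullet> d"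
    using \<xi> by (simp add: zero_le_mult_iff inner_diff_left)
  also have "\<dots> \<le> norm (game_op blk g z) * norm d"
    by (rule norm_cauchy_schwarz)
  finally show ?thesis
    using mvt d_block by (simp add: \<phi>_def d_def y_def)
qed

lemma total_gap_le:
  fixes f :: "nat \<Rightarrow> real^'n::finite \<Rightarrow> real"
  assumes grad: "\<forall>k<K. \<forall>x. (f k has_derivative (\<lambda>h. g k x \<bullet> h)) (at x)"
    and monotone: "\<forall>x y. (game_op blk g y - game_op blk g x) \<bullet> (y - x) \<ge> 0"
    and r_nonneg: "0 \<le> r"
  shows "total_gap blk K f (\<lambda>k. ball_block blk k z0 r) z
           \<le> real K * (norm (game_op blk g z) * (norm (z - z0) + r))"
proof -
  let ?B = "norm (game_op blk g z) * (norm (z - z0) + r)"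
  have "f k z - (INF w\<in>ball_block blk k z0 r. f k (replace_block blk k w z)) \<le> ?B"
    if "k < K" for k
  proof -
    have "block_proj blk k z0 \<in> ball_block blk k z0 r"
      using r_nonneg by (simp add: ball_block_def block_proj_def vec_eq_iff)
    moreover have "f k z - ?B \<le> f k (replace_block blk k w z)" if "w \<in> ball_block blk k z0 r" for w
    proof -
      have "f k z - f k (replace_block blk k w z)
          \<le> norm (game_op blk g z) * norm (z - replace_block blk k w z)"
        using grad monotone \<open>k < K\<close> by (intro unilateral_deviation_le) auto
      also have "\<dots> \<le> ?B"
        by (intro mult_left_mono dist_replace_block_le that norm_ge_zero)
      finally show ?thesis by linarith
    qed
    ultimately have "f k z - ?B \<le> (INF w\<in>ball_block blk k z0 r. f k (replace_block blk k w z))"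
      by (intro cINF_greatest) auto
    then show ?thesis by linarith
  qed
  then show ?thesis
    unfolding total_gap_def using sum_bounded_above[of "{..<K}" _ ?B] by simp
qed

theorem corollary6:
  fixes blk :: "'n::finite \<Rightarrow> nat" and K :: nat
    and f :: "nat \<Rightarrow> real^'n \<Rightarrow> real"
    and g :: "nat \<Rightarrow> real^'n \<Rightarrow> real^'n"
    and H :: "nat \<Rightarrow> real^'n \<Rightarrow> (real^'n) \<Rightarrow>\<^sub>L (real^'n)"
    and DF :: "real^'n \<Rightarrow> (real^'n) \<Rightarrow>\<^sub>L (real^'n)"
    and z :: "int \<Rightarrow> real^'n" and zstar :: "real^'n"
    and ell \<Lambda> D \<eta> :: real and T :: nat
  assumes blk_range: "\<forall>i. blk i < K"
    and blk_nonempty: "\<forall>k<K. \<exists>i. blk i = k"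
    and grad: "\<forall>k<K. \<forall>x. (f k has_derivative (\<lambda>h. g k x \<bullet> h)) (at x)"
    and hess: "\<forall>k<K. \<forall>x. (g k has_derivative blinfun_apply (H k x)) (at x)"
    and hess_cont: "\<forall>k<K. continuous_on UNIV (H k)"
    and monotone: "\<forall>x y. (game_op blk g y - game_op blk g x) \<bullet> (y - x) \<ge> 0"
    and jac: "\<forall>x. (game_op blk g has_derivative blinfun_apply (DF x)) (at x)"
    and ell_pos: "ell > 0" and Lambda_pos: "\<Lambda> > 0"
    and lip_F: "\<forall>x y. norm (game_op blk g x - game_op blk g y) \<le> ell * norm (x - y)"
    and lip_DF: "\<forall>x y. norm (DF x - DF y) \<le> \<Lambda> * norm (x - y)"
    and zstar: "game_op blk g zstar = 0"
    and D_m1: "norm (zstar - z (-1)) \<le> D"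
    and D_0: "norm (zstar - z 0) \<le> D"
    and eta_pos: "\<eta> > 0"
    and eta_le: "\<eta> \<le> min (1 / (150 * ell)) (1 / (1711 * D * \<Lambda>))"
    and iter: "\<forall>t::int\<ge>0. z (t + 1) = z t - (2 * \<eta>) *\<^sub>R game_op blk g (z t)
                                       + \<eta> *\<^sub>R game_op blk g (z (t - 1))"
    and T: "T \<ge> 1"
  shows "total_gap blk K f (\<lambda>k. ball_block blk k (z 0) (3 * D)) (z (int T))
           \<le> 180 * real K * D^2 / (\<eta> * sqrt (real T))"
proof -
  let ?F = "game_op blk g" and ?zT = "z (int T)"
  have step_size: "\<eta> * ell \<le> 1/5"
    using eta_le ell_pos by (simp add: field_simps)
  from optimistic_gradient_last_iterate[where T = T, OF monotone[rule_format] lip_F[rule_format]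
      eta_pos less_imp_le[OF ell_pos] step_size zstar D_m1 D_0 iter[rule_format]]
  have dist: "norm (?zT - zstar) \<le> 4 * D"
    and rate: "\<eta> * sqrt (real T) * norm (?F ?zT) \<le> 9 * D"
    by simp_all
  have D_nonneg: "0 \<le> D"
    using D_0 norm_ge_zero order_trans by blast
  have "norm (?zT - z 0) \<le> 5 * D"
    using norm_triangle_ineq[of "?zT - zstar" "zstar - z 0"] dist D_0 by simp
  have "total_gap blk K f (\<lambda>k. ball_block blk k (z 0) (3 * D)) ?zT
      \<le> real K * (norm (?F ?zT) * (norm (?zT - z 0) + 3 * D))"
    using grad monotone D_nonneg by (intro total_gap_le) auto
  also have "\<dots> \<le> real K * (norm (?F ?zT) * (8 * D))"
    using \<open>norm (?zT - z 0) \<le> 5 * D\<close> by (intro mult_left_mono) auto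
  also have "\<dots> \<le> real K * (9 * D / (\<eta> * sqrt (real T)) * (8 * D))"
    using rate T eta_pos D_nonneg
    by (intro mult_left_mono mult_right_mono) (simp_all add: pos_le_divide_eq mult_ac)
  also have "\<dots> = 72 * real K * D^2 / (\<eta> * sqrt (real T))"
    by (simp add: power2_eq_square)
  also have "\<dots> \<le> 180 * real K * D^2 / (\<eta> * sqrt (real T))"
    using eta_pos by (intro divide_right_mono mult_right_mono) simp_all
  finally show ?thesis .
qed

end
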